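(* Let $\sigma:\mathbb{R}\to\mathbb{R}$ satisfy $|\sigma(x)|\le1$ for all $x$, be $L$-Lipschitz, and be $(R,\varepsilon)$-nondegenerate with $R\ge1$, $\varepsilon<1$. Let $\ell\ge 20(R+L)/\varepsilon$ and $\sigma^{(\ell)}(x)=\sigma(x)e^{-x^2/(2\ell^2)}$. Then $$\int_{-\infty}^{\infty}|\widehat{\sigma^{(\ell)}}(y)|^2\,|y|^2\,e^{-y^2/\ell^2}\,dy\ge\frac{\varepsilon^2}{8R}.$$
   Context: Fourier transform: $\widehat g(y)=\frac{1}{\sqrt{2\pi}}\int_{-\infty}^{\infty}e^{-\mathrm{i}yx}g(x)\,dx$. A function $\sigma$ is $(R,\varepsilon)$-nondegenerate if there are $x_1,x_2\in[-R,R]$ with $\sigma(x_1)-\sigma(x_2)\ge\varepsilon$. *)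

theory Defs
  imports "HOL-Analysis.Analysis"
begin

definition fourier :: "(real \<Rightarrow> real) \<Rightarrow> real \<Rightarrow> complex" where
  "fourier g y = complex_of_real (1 / sqrt (2 * pi)) *
      (LINT x|lborel. cis (- (y * x)) * complex_of_real (g x))"

definition nondegenerate :: "real \<Rightarrow> real \<Rightarrow> (real \<Rightarrow> real) \<Rightarrow> bool" where
  "nondegenerate R \<epsilon> \<sigma> \<longleftrightarrow>
     (\<exists>x1 x2. x1 \<in> {-R..R} \<and> x2 \<in> {-R..R} \<and> \<sigma> x1 - \<sigma> x2 \<ge> \<epsilon>)"

end

theory Submission
  imports Defs "HOL-Probability.Probability"
begin

(* Let x1, x2 witness the nondegeneracy and pair the Fourier transform of g = sigma^(l) with
   Q(y) = exp(-y^2/l^2) (exp(i y x1) - exp(i y x2)).  By Fubini and the Fourier transform of a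
   Gaussian, the pairing equals sqrt(2 pi) times the difference of the Gaussian smoothings of g
   (of width sqrt 2 / l) at x1 and x2.  As sigma is Lipschitz and l is large, these smoothings are
   within eps/8 of sigma x1 and sigma x2, so the pairing is at least sqrt(2 pi) 3 eps/4.  On the
   other hand |Q(y)|^2 / (y^2 exp(-y^2/l^2)) <= 8 R^2 / (1 + R^2 y^2), whose integral is at most
   8 pi R, and Cauchy-Schwarz with the weight y^2 exp(-y^2/l^2) gives the bound 9 eps^2 / (64 R). *)

lemma borel_measurable_cis [measurable]: "cis \<in> borel_measurable borel"
  by (intro borel_measurable_continuous_onI continuous_intros)

lemma integral_std_normal_density_cis:
  "(LINT u|lborel. complex_of_real (std_normal_density u) * cis (t * u)) = exp (- t\<^sup>2 / 2)"
proof -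
  have "char std_normal_distribution t = (LINT u|lborel. std_normal_density u *\<^sub>R iexp (t * u))"
    unfolding char_def by (subst integral_density) auto
  then show ?thesis
    by (simp add: char_std_normal_distribution cis_conv_exp scaleR_conv_of_real mult.commute)
qed

lemma integral_gaussian_cis:
  fixes l t :: real
  assumes l: "l > 0"
  shows "(LINT y|lborel. complex_of_real (exp (- y\<^sup>2 / l\<^sup>2)) * cis (y * t))
       = 2 * pi * normal_density 0 (sqrt 2 / l) t"
proof -
  define c where "c = l / sqrt 2"
  have c: "c > 0" using l by (simp add: c_def)
  have c2: "c\<^sup>2 = l\<^sup>2 / 2" by (simp add: c_def power_divide)
  have gauss: "exp (- (0 + c * u)\<^sup>2 / l\<^sup>2) = sqrt (2 * pi) * std_normal_density u" for u
    using l by (simp add: std_normal_density_def power_mult_distrib c2)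
  have "(LINT y|lborel. complex_of_real (exp (- y\<^sup>2 / l\<^sup>2)) * cis (y * t))
      = c *\<^sub>R (LINT u|lborel. complex_of_real (exp (- (0 + c * u)\<^sup>2 / l\<^sup>2)) * cis ((0 + c * u) * t))"
    using c by (subst lborel_integral_real_affine[where c = c and t = 0]) simp_all
  also have "\<dots> = c *\<^sub>R (LINT u|lborel. sqrt (2 * pi) * (std_normal_density u * cis ((c * t) * u)))"
    unfolding gauss by (simp add: ac_simps)
  also have "\<dots> = c * sqrt (2 * pi) * exp (- (c * t)\<^sup>2 / 2)"
    by (simp add: integral_std_normal_density_cis scaleR_conv_of_real)
  also have "c * sqrt (2 * pi) * exp (- (c * t)\<^sup>2 / 2) = 2 * pi * normal_density 0 (sqrt 2 / l) t"
    using l by (simp add: normal_density_def c_def real_sqrt_mult real_sqrt_divide field_simps)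
  finally show ?thesis .
qed

lemma integrable_exp_neg_square_div:
  fixes c :: real
  assumes c: "c > 0"
  shows "integrable lborel (\<lambda>y. exp (- y\<^sup>2 / c))"
proof -
  define s where "s = sqrt (c / 2)"
  have "sqrt (2 * pi * s\<^sup>2) * normal_density 0 s y = exp (- y\<^sup>2 / c)" for y
    using c by (simp add: s_def normal_density_def)
  moreover have "integrable lborel (\<lambda>y. sqrt (2 * pi * s\<^sup>2) * normal_density 0 s y)"
    using c by (intro integrable_mult_right integrable_normal_density) (simp add: s_def)
  ultimately show ?thesis by simp
qed

lemma integrable_gaussian_cis:
  fixes l t :: real
  assumes "l > 0"
  shows "integrable lborel (\<lambda>y. complex_of_real (exp (- y\<^sup>2 / l\<^sup>2)) * cis (y * t))"
  by (rule Bochner_Integration.integrable_bound[OF integrable_exp_neg_square_div[of "l\<^sup>2"]])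
    (use assms in \<open>auto simp: norm_mult\<close>)

lemma integrable_bounded_mult_gaussian:
  fixes f :: "real \<Rightarrow> real" and B c :: real
  assumes [measurable]: "f \<in> borel_measurable borel"
    and f: "\<And>x. \<bar>f x\<bar> \<le> B" and c: "c > 0"
  shows "integrable lborel (\<lambda>x. f x * exp (- x\<^sup>2 / c))"
proof (rule Bochner_Integration.integrable_bound)
  show "integrable lborel (\<lambda>x. B * exp (- x\<^sup>2 / c))"
    using c by (intro integrable_mult_right integrable_exp_neg_square_div)
  show "AE x in lborel. norm (f x * exp (- x\<^sup>2 / c)) \<le> norm (B * exp (- x\<^sup>2 / c))"
    using f by (intro AE_I2) (simp add: abs_mult mult_right_mono order_trans[OF _ abs_ge_self])
qed simp

lemma lipschitz_on_UNIV_borel_measurable: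
  fixes f :: "'a::metric_space \<Rightarrow> 'b::metric_space"
  assumes "C-lipschitz_on UNIV f"
  shows "f \<in> borel_measurable borel"
  using lipschitz_on_continuous_on[OF assms] by (rule borel_measurable_continuous_onI)

lemma fourier_gaussian_pairing:
  fixes g :: "real \<Rightarrow> real" and l a :: real
  assumes l: "l > 0" and [measurable]: "g \<in> borel_measurable borel" and g: "integrable lborel g"
  defines "G \<equiv> \<lambda>y. complex_of_real (exp (- y\<^sup>2 / l\<^sup>2)) * cis (y * a)"
  shows "integrable lborel (\<lambda>y. fourier g y * G y)"
    and "(LINT y|lborel. fourier g y * G y)
           = sqrt (2 * pi) * (LINT x|lborel. g x * normal_density a (sqrt 2 / l) x)"
proof -
  define k where "k = complex_of_real (1 / sqrt (2 * pi))"
  define f where "f x y = k * cis (- (y * x)) * g x * G y" for x y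
  have G: "integrable lborel G"
    unfolding G_def using l by (rule integrable_gaussian_cis)
  have f_int: "integrable (lborel \<Otimes>\<^sub>M lborel) (case_prod f)"
  proof (rule lborel_pair.Fubini_integrable)
    show "case_prod f \<in> borel_measurable (lborel \<Otimes>\<^sub>M lborel)"
      unfolding f_def G_def by measurable
    have "(LINT y|lborel. norm (f x y)) = (norm k * (LINT y|lborel. norm (G y))) * \<bar>g x\<bar>" for x
      unfolding f_def by (simp add: norm_mult ac_simps)
    then show "integrable lborel (\<lambda>x. LINT y|lborel. norm (case_prod f (x, y)))"
      using g by simp
    have "integrable lborel (\<lambda>y. (k * g x) * (cis (- (y * x)) * G y))" for x
    proof (intro integrable_mult_right Bochner_Integration.integrable_bound[OF integrable_norm[OF G]])
      show "AE y in lborel. norm (cis (- (y * x)) * G y) \<le> norm (norm (G y))"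
        by (simp add: norm_mult)
    qed (simp add: G_def)
    then show "AE x in lborel. integrable lborel (\<lambda>y. case_prod f (x, y))"
      unfolding f_def by (simp add: ac_simps)
  qed
  have inner_x: "(LINT x|lborel. f x y) = fourier g y * G y" for y
    unfolding f_def fourier_def k_def by (simp add: ac_simps)
  show "integrable lborel (\<lambda>y. fourier g y * G y)"
    using lborel_pair.integrable_snd[OF f_int] unfolding inner_x .
  have inner_y: "(LINT y|lborel. f x y) = sqrt (2 * pi) * (g x * normal_density a (sqrt 2 / l) x)" for x
  proof -
    have "cis (- (y * x)) * cis (y * a) = cis (y * (a - x))" for y
      by (simp add: cis_mult algebra_simps)
    then have f_eq: "f x y = k * g x * (complex_of_real (exp (- y\<^sup>2 / l\<^sup>2)) * cis (y * (a - x)))" for y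
      unfolding f_def G_def by (metis mult.commute mult.left_commute)
    then have "(LINT y|lborel. f x y) = k * g x * (2 * pi * normal_density 0 (sqrt 2 / l) (a - x))"
      by (simp only: f_eq integral_mult_right_zero integral_gaussian_cis[OF l])
    also have "normal_density 0 (sqrt 2 / l) (a - x) = normal_density a (sqrt 2 / l) x"
      by (simp add: normal_density_def power2_commute)
    also have "k * g x * (2 * pi * normal_density a (sqrt 2 / l) x)
        = (2 * pi / sqrt (2 * pi)) * (g x * normal_density a (sqrt 2 / l) x)"
      unfolding k_def by simp
    also have "2 * pi / sqrt (2 * pi) = sqrt (2 * pi)"
      by (rule real_div_sqrt) simp
    finally show ?thesis .
  qed
  have "(LINT y|lborel. fourier g y * G y) = (LINT x|lborel. LINT y|lborel. f x y)"
    using lborel_pair.Fubini_integral[OF f_int] unfolding inner_x .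
  then show "(LINT y|lborel. fourier g y * G y)
           = sqrt (2 * pi) * (LINT x|lborel. g x * normal_density a (sqrt 2 / l) x)"
    unfolding inner_y integral_complex_of_real by simp
qed

lemma normal_expectation_deviation_le:
  fixes f :: "real \<Rightarrow> real" and a b c \<mu> s :: real
  assumes s: "s > 0" and [measurable]: "f \<in> borel_measurable borel"
    and dev: "\<And>x. \<bar>f x - c\<bar> \<le> a + b * (x - \<mu>)\<^sup>2"
  shows "\<bar>(LINT x|lborel. f x * normal_density \<mu> s x) - c\<bar> \<le> a + b * s\<^sup>2"
proof -
  let ?N = "normal_density \<mu> s"
  define B where "B x = (a + b * (x - \<mu>)\<^sup>2) * ?N x" for x
  have N_int: "integrable lborel ?N" and N_moment: "integrable lborel (\<lambda>x. ?N x * (x - \<mu>)\<^sup>2)"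
    using s by (simp_all add: integrable_normal_moment)
  have N_variance: "(LINT x|lborel. ?N x * (x - \<mu>)\<^sup>2) = s\<^sup>2"
    using integral_normal_moment_even[OF s, of \<mu> 1] by (simp add: power2_eq_square)
  have B_split: "B x = a * ?N x + b * (?N x * (x - \<mu>)\<^sup>2)" for x
    unfolding B_def by (simp add: algebra_simps)
  have B_int: "integrable lborel B"
    unfolding B_split using N_int N_moment by simp
  have B_integral: "(LINT x|lborel. B x) = a + b * s\<^sup>2"
    unfolding B_split using s N_int N_moment N_variance by simp
  have dev_le: "\<bar>(f x - c) * ?N x\<bar> \<le> B x" for x
    unfolding B_def abs_mult using dev[of x] by (simp add: mult_right_mono)
  have dev_int: "integrable lborel (\<lambda>x. (f x - c) * ?N x)"
  proof (rule Bochner_Integration.integrable_bound[OF B_int])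
    show "AE x in lborel. norm ((f x - c) * ?N x) \<le> norm (B x)"
      by (intro AE_I2) (metis dev_le abs_ge_self order_trans real_norm_def)
  qed simp
  have "(LINT x|lborel. f x * ?N x) - c = (LINT x|lborel. (f x - c) * ?N x)"
  proof -
    have "integrable lborel (\<lambda>x. f x * ?N x)"
      using Bochner_Integration.integrable_add[OF dev_int integrable_mult_right[OF N_int, of c]]
      by (simp add: algebra_simps)
    then show ?thesis
      using s N_int by (simp add: left_diff_distrib)
  qed
  also have "\<bar>\<dots>\<bar> \<le> (LINT x|lborel. \<bar>(f x - c) * ?N x\<bar>)"
    by (rule integral_abs_bound)
  also have "\<dots> \<le> (LINT x|lborel. B x)"
    using dev_int B_int dev_le by (intro integral_mono) auto
  finally show ?thesis
    unfolding B_integral .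
qed

lemma damped_lipschitz_deviation_le:
  fixes \<sigma> :: "real \<Rightarrow> real" and L l s x x0 :: real
  assumes bounded: "\<And>x. \<bar>\<sigma> x\<bar> \<le> 1" and lip: "L-lipschitz_on UNIV \<sigma>"
    and l: "l > 0" and s: "s > 0"
  shows "\<bar>\<sigma> x * exp (- x\<^sup>2 / (2 * l\<^sup>2)) - \<sigma> x0\<bar>
           \<le> (L * s / 2 + x0\<^sup>2 / l\<^sup>2) + (L / (2 * s) + 1 / l\<^sup>2) * (x - x0)\<^sup>2"
proof -
  define e where "e = exp (- x\<^sup>2 / (2 * l\<^sup>2))"
  have e_le: "e \<le> 1" and one_minus_e: "1 - e \<le> x\<^sup>2 / (2 * l\<^sup>2)"
    unfolding e_def using l exp_ge_add_one_self[of "- x\<^sup>2 / (2 * l\<^sup>2)"] by auto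
  have L: "L \<ge> 0"
    using lip by (rule lipschitz_on_nonneg)
  have "\<bar>\<sigma> x * e - \<sigma> x0\<bar> = \<bar>(\<sigma> x - \<sigma> x0) - \<sigma> x * (1 - e)\<bar>"
    by (simp add: algebra_simps)
  also have "\<dots> \<le> \<bar>\<sigma> x - \<sigma> x0\<bar> + \<bar>\<sigma> x\<bar> * (1 - e)"
    using e_le by (metis abs_mult abs_of_nonneg abs_triangle_ineq4 diff_ge_0_iff_ge)
  also have "\<dots> \<le> L * \<bar>x - x0\<bar> + x\<^sup>2 / (2 * l\<^sup>2)"
    using lipschitz_onD[OF lip, of x x0] bounded[of x] one_minus_e e_le
    by (intro add_mono) (auto simp: dist_real_def intro: order_trans[OF mult_right_mono])
  also have "\<dots> \<le> L * ((s + (x - x0)\<^sup>2 / s) / 2) + (x0\<^sup>2 + (x - x0)\<^sup>2) / l\<^sup>2"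
  proof (intro add_mono mult_left_mono L)
    have "2 * s * \<bar>x - x0\<bar> \<le> s\<^sup>2 + (x - x0)\<^sup>2"
      using sum_squares_ge_zero[of "\<bar>x - x0\<bar> - s" 0] by (simp add: power2_eq_square algebra_simps)
    then show "\<bar>x - x0\<bar> \<le> (s + (x - x0)\<^sup>2 / s) / 2"
      using s by (simp add: field_simps power2_eq_square)
    have "x\<^sup>2 \<le> 2 * (x0\<^sup>2 + (x - x0)\<^sup>2)"
      using sum_squares_ge_zero[of "x - 2 * x0" 0] by (simp add: power2_eq_square algebra_simps)
    then show "x\<^sup>2 / (2 * l\<^sup>2) \<le> (x0\<^sup>2 + (x - x0)\<^sup>2) / l\<^sup>2"
      using l by (simp add: field_simps)
  qed
  also have "\<dots> = (L * s / 2 + x0\<^sup>2 / l\<^sup>2) + (L / (2 * s) + 1 / l\<^sup>2) * (x - x0)\<^sup>2"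
    using s l by (simp add: field_simps)
  finally show ?thesis
    unfolding e_def .
qed

lemma gaussian_smoothing_error:
  fixes \<sigma> :: "real \<Rightarrow> real" and L l s x0 :: real
  assumes bounded: "\<And>x. \<bar>\<sigma> x\<bar> \<le> 1" and lip: "L-lipschitz_on UNIV \<sigma>"
    and l: "l > 0" and s: "s > 0"
  shows "\<bar>(LINT x|lborel. \<sigma> x * exp (- x\<^sup>2 / (2 * l\<^sup>2)) * normal_density x0 s x) - \<sigma> x0\<bar>
          \<le> L * s + (x0\<^sup>2 + s\<^sup>2) / l\<^sup>2"
proof -
  have [measurable]: "\<sigma> \<in> borel_measurable borel"
    using lip by (rule lipschitz_on_UNIV_borel_measurable)
  have "\<bar>(LINT x|lborel. \<sigma> x * exp (- x\<^sup>2 / (2 * l\<^sup>2)) * normal_density x0 s x) - \<sigma> x0\<bar>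
          \<le> (L * s / 2 + x0\<^sup>2 / l\<^sup>2) + (L / (2 * s) + 1 / l\<^sup>2) * s\<^sup>2"
    using s damped_lipschitz_deviation_le[OF bounded lip l s]
    by (intro normal_expectation_deviation_le) simp_all
  also have "\<dots> = L * s + (x0\<^sup>2 + s\<^sup>2) / l\<^sup>2"
    using s l by (simp add: field_simps power2_eq_square)
  finally show ?thesis .
qed

lemma smoothing_error_le:
  fixes x R L \<epsilon> l :: real
  assumes x: "\<bar>x\<bar> \<le> R" and R: "R \<ge> 1" and L: "L \<ge> 0" and eps: "0 < \<epsilon>" "\<epsilon> < 1"
    and ell: "l \<ge> 20 * (R + L) / \<epsilon>"
  shows "L * (sqrt 2 / l) + (x\<^sup>2 + (sqrt 2 / l)\<^sup>2) / l\<^sup>2 \<le> \<epsilon> / 8"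
proof -
  have l: "l > 0"
    using ell R L eps by (smt (verit) divide_pos_pos)
  have "R / l + L / l \<le> \<epsilon> / 20"
    using ell eps l by (simp add: field_simps)
  moreover have "0 \<le> L / l" and "0 \<le> 1 / l" and "1 / l \<le> R / l"
    using L R l by (simp_all add: divide_right_mono)
  ultimately have L_l: "L / l \<le> \<epsilon> / 20" and R_l: "R / l \<le> \<epsilon> / 20" and one_l: "1 / l \<le> \<epsilon> / 20"
    by linarith+
  have sqrt2: "sqrt 2 \<le> 3 / 2"
    by (rule real_le_lsqrt) (auto simp: power2_eq_square)
  have "L * (sqrt 2 / l) = sqrt 2 * (L / l)"
    by simp
  also have "\<dots> \<le> 3 / 2 * (\<epsilon> / 20)"
    using sqrt2 L_l L l by (intro mult_mono) auto
  finally have lipschitz_part: "L * (sqrt 2 / l) \<le> 3 / 40 * \<epsilon>" by simp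
  have x_l: "\<bar>x\<bar> / l \<le> \<epsilon> / 20"
    using x R_l l by (meson divide_right_mono order_trans less_imp_le)
  have "(x\<^sup>2 + (sqrt 2 / l)\<^sup>2) / l\<^sup>2 = (\<bar>x\<bar> / l)\<^sup>2 + 2 * (1 / l) ^ 4"
    using l by (simp add: field_simps power2_eq_square power4_eq_xxxx)
  also have "\<dots> \<le> (\<epsilon> / 20)\<^sup>2 + 2 * (\<epsilon> / 20) ^ 4"
    using x_l one_l l by (intro add_mono mult_left_mono power_mono) auto
  also have "\<dots> = \<epsilon>\<^sup>2 / 400 + \<epsilon> ^ 4 / 80000"
    by (simp add: power_divide)
  finally have damping_part: "(x\<^sup>2 + (sqrt 2 / l)\<^sup>2) / l\<^sup>2 \<le> \<epsilon>\<^sup>2 / 400 + \<epsilon> ^ 4 / 80000" .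
  have "\<epsilon>\<^sup>2 \<le> \<epsilon>" and "\<epsilon> ^ 4 \<le> \<epsilon>"
    using eps power_decreasing[of 1 _ \<epsilon>] by simp_all
  then show ?thesis
    using eps lipschitz_part damping_part by linarith
qed

lemma gaussian_smoothing_gap_ge:
  fixes \<sigma> :: "real \<Rightarrow> real" and L R \<epsilon> l x1 x2 :: real
  assumes bounded: "\<And>x. \<bar>\<sigma> x\<bar> \<le> 1" and lip: "L-lipschitz_on UNIV \<sigma>"
    and x1: "\<bar>x1\<bar> \<le> R" and x2: "\<bar>x2\<bar> \<le> R" and gap: "\<epsilon> \<le> \<sigma> x1 - \<sigma> x2"
    and R: "R \<ge> 1" and eps: "0 < \<epsilon>" "\<epsilon> < 1" and ell: "l \<ge> 20 * (R + L) / \<epsilon>"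
  shows "3 / 4 * \<epsilon> \<le> (LINT x|lborel. \<sigma> x * exp (- x\<^sup>2 / (2 * l\<^sup>2)) * normal_density x1 (sqrt 2 / l) x)
                     - (LINT x|lborel. \<sigma> x * exp (- x\<^sup>2 / (2 * l\<^sup>2)) * normal_density x2 (sqrt 2 / l) x)"
proof -
  have L: "L \<ge> 0"
    using lip by (rule lipschitz_on_nonneg)
  have l: "l > 0"
    using ell R L eps by (smt (verit) divide_pos_pos)
  have s: "sqrt 2 / l > 0"
    using l by simp
  have "\<bar>(LINT x|lborel. \<sigma> x * exp (- x\<^sup>2 / (2 * l\<^sup>2)) * normal_density x0 (sqrt 2 / l) x) - \<sigma> x0\<bar>
          \<le> \<epsilon> / 8" if "\<bar>x0\<bar> \<le> R" for x0
    using gaussian_smoothing_error[OF bounded lip l s] smoothing_error_le[OF that R L eps ell]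
    by (rule order_trans)
  from this[OF x1] this[OF x2] show ?thesis
    using gap by linarith
qed

lemma norm_cis_diff_power2: "(cmod (cis u - cis v))\<^sup>2 = 2 - 2 * cos (u - v)"
proof -
  have "(cmod (cis u - cis v))\<^sup>2 = (cos u - cos v)\<^sup>2 + (sin u - sin v)\<^sup>2"
    unfolding cmod_power2 by simp
  also have "\<dots> = (sin u)\<^sup>2 + (cos u)\<^sup>2 + ((sin v)\<^sup>2 + (cos v)\<^sup>2) - 2 * (cos u * cos v + sin u * sin v)"
    by (simp add: power2_eq_square algebra_simps)
  also have "\<dots> = 2 - 2 * cos (u - v)"
    by (simp add: cos_diff)
  finally show ?thesis .
qed

lemma two_minus_two_cos_le: "2 - 2 * cos w \<le> (w::real)\<^sup>2"
proof -
  have "(sin (w / 2))\<^sup>2 \<le> (w / 2)\<^sup>2"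
    using abs_sin_x_le_abs_x[of "w / 2"] by (metis abs_ge_zero power2_abs power_mono)
  then show ?thesis
    using cos_double_sin[of "w / 2"] by (simp add: power_divide)
qed

lemma norm_cis_diff_power2_div_le:
  fixes R y a b :: real
  assumes R: "R > 0" and ab: "\<bar>a - b\<bar> \<le> 2 * R"
  shows "(cmod (cis (y * a) - cis (y * b)))\<^sup>2 / y\<^sup>2 \<le> 8 * R\<^sup>2 / (1 + (R * y)\<^sup>2)"
proof (cases "y = 0")
  case False
  define D where "D = (cmod (cis (y * a) - cis (y * b)))\<^sup>2"
  have D_le_4: "D \<le> 4"
    unfolding D_def norm_cis_diff_power2 using cos_ge_minus_one[of "y * a - y * b"] by linarith
  have "D \<le> (y * a - y * b)\<^sup>2"
    unfolding D_def norm_cis_diff_power2 by (rule two_minus_two_cos_le)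
  also have "\<dots> = y\<^sup>2 * \<bar>a - b\<bar>\<^sup>2"
    by (simp add: power2_eq_square algebra_simps)
  also have "\<dots> \<le> y\<^sup>2 * (2 * R)\<^sup>2"
    using ab by (intro mult_left_mono power_mono) simp_all
  finally have D_le: "D \<le> 4 * (R * y)\<^sup>2"
    by (simp add: power_mult_distrib mult_ac)
  have "D * (1 + (R * y)\<^sup>2) = D + D * (R * y)\<^sup>2"
    by (simp add: algebra_simps)
  also have "\<dots> \<le> 4 * (R * y)\<^sup>2 + 4 * (R * y)\<^sup>2"
    using D_le D_le_4 by (intro add_mono mult_right_mono) simp_all
  finally have "D * (1 + (R * y)\<^sup>2) \<le> 8 * R\<^sup>2 * y\<^sup>2"
    by (simp add: power_mult_distrib)
  moreover have "0 < 1 + (R * y)\<^sup>2" and "0 < y\<^sup>2"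
    using False by (simp_all add: add_pos_nonneg)
  ultimately show ?thesis
    unfolding D_def[symmetric] by (simp add: divide_le_eq le_divide_eq mult.commute mult.left_commute)
qed simp

lemma nn_integral_inverse_one_plus_square_le:
  fixes R :: real
  assumes R: "R > 0"
  shows "(\<integral>\<^sup>+y. ennreal (1 / (1 + (R * y)\<^sup>2)) \<partial>lborel) \<le> ennreal (pi / R)"
proof -
  define B where "B y = 1 / (1 + (R * y)\<^sup>2)" for y
  define h where "h y = ennreal (B y) * indicator {0..} y" for y
  have [measurable]: "B \<in> borel_measurable borel"
    unfolding B_def by measurable
  have half_line: "(\<integral>\<^sup>+y. h y \<partial>lborel) = ennreal (pi / (2 * R) - arctan (R * 0) / R)"
    unfolding h_def
  proof (rule nn_integral_FTC_atLeast)
    show "((\<lambda>y. arctan (R * y) / R) has_real_derivative B y) (at y)" for y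
    proof -
      have "0 < 1 + (R * y)\<^sup>2"
        by (simp add: add_pos_nonneg)
      then show ?thesis
        unfolding B_def using R
        by - (rule derivative_eq_intros refl | simp add: inverse_eq_divide)+
    qed
    have "((\<lambda>y. arctan (R * y)) \<longlongrightarrow> pi / 2) at_top"
      using R by (intro filterlim_compose[OF tendsto_arctan_at_top]
          filterlim_tendsto_pos_mult_at_top[OF tendsto_const _ filterlim_ident])
    then have "((\<lambda>y. arctan (R * y) / R) \<longlongrightarrow> pi / 2 / R) at_top"
      using R by (intro tendsto_divide tendsto_const) auto
    then show "((\<lambda>y. arctan (R * y) / R) \<longlongrightarrow> pi / (2 * R)) at_top"
      by simp
  qed (simp_all add: B_def)
  have "(\<integral>\<^sup>+y. h (- y) \<partial>lborel) = (\<integral>\<^sup>+y. h y \<partial>lborel)"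
    using nn_integral_real_affine[of h "-1" 0] unfolding h_def by simp
  moreover have "(\<integral>\<^sup>+y. ennreal (B y) \<partial>lborel) \<le> (\<integral>\<^sup>+y. h y + h (- y) \<partial>lborel)"
    unfolding h_def B_def by (intro nn_integral_mono) (simp add: indicator_def)
  ultimately have "(\<integral>\<^sup>+y. ennreal (B y) \<partial>lborel) \<le> 2 * (\<integral>\<^sup>+y. h y \<partial>lborel)"
    by (simp add: nn_integral_add h_def mult_2)
  also have "\<dots> = ennreal 2 * ennreal (pi / (2 * R))"
    unfolding half_line by simp
  also have "\<dots> = ennreal (pi / R)"
    by (subst ennreal_mult[symmetric]) (use R in auto)
  finally show ?thesis
    unfolding B_def .
qed

lemma nn_integral_damped_cis_diff_le:
  fixes l R x1 x2 :: real
  assumes l: "l > 0" and R: "R > 0" and x12: "\<bar>x1 - x2\<bar> \<le> 2 * R"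
  shows "(\<integral>\<^sup>+y. ennreal ((cmod (exp (- y\<^sup>2 / l\<^sup>2) * (cis (y * x1) - cis (y * x2))))\<^sup>2
                        / (\<bar>y\<bar>\<^sup>2 * exp (- y\<^sup>2 / l\<^sup>2))) \<partial>lborel)
         \<le> ennreal (8 * pi * R)"
proof -
  have "(cmod (exp (- y\<^sup>2 / l\<^sup>2) * (cis (y * x1) - cis (y * x2))))\<^sup>2 / (\<bar>y\<bar>\<^sup>2 * exp (- y\<^sup>2 / l\<^sup>2))
        \<le> 8 * R\<^sup>2 * (1 / (1 + (R * y)\<^sup>2))" for y
  proof -
    have "(cmod (exp (- y\<^sup>2 / l\<^sup>2) * (cis (y * x1) - cis (y * x2))))\<^sup>2 / (\<bar>y\<bar>\<^sup>2 * exp (- y\<^sup>2 / l\<^sup>2))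
        = exp (- y\<^sup>2 / l\<^sup>2) * ((cmod (cis (y * x1) - cis (y * x2)))\<^sup>2 / y\<^sup>2)"
      by (simp add: norm_mult power_mult_distrib power2_eq_square)
    also have "\<dots> \<le> (cmod (cis (y * x1) - cis (y * x2)))\<^sup>2 / y\<^sup>2"
      using l by (intro mult_left_le_one_le) auto
    also have "\<dots> \<le> 8 * R\<^sup>2 * (1 / (1 + (R * y)\<^sup>2))"
      using norm_cis_diff_power2_div_le[OF R x12] by simp
    finally show ?thesis .
  qed
  then have "(\<integral>\<^sup>+y. ennreal ((cmod (exp (- y\<^sup>2 / l\<^sup>2) * (cis (y * x1) - cis (y * x2))))\<^sup>2
                        / (\<bar>y\<bar>\<^sup>2 * exp (- y\<^sup>2 / l\<^sup>2))) \<partial>lborel)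
        \<le> (\<integral>\<^sup>+y. ennreal (8 * R\<^sup>2) * ennreal (1 / (1 + (R * y)\<^sup>2)) \<partial>lborel)"
    by (intro nn_integral_mono) (simp add: ennreal_mult[symmetric] ennreal_leI)
  also have "\<dots> = ennreal (8 * R\<^sup>2) * (\<integral>\<^sup>+y. ennreal (1 / (1 + (R * y)\<^sup>2)) \<partial>lborel)"
    by (rule nn_integral_cmult) measurable
  also have "\<dots> \<le> ennreal (8 * R\<^sup>2) * ennreal (pi / R)"
    using nn_integral_inverse_one_plus_square_le[OF R] by (rule mult_left_mono) simp
  also have "\<dots> = ennreal (8 * pi * R)"
    using R by (simp add: ennreal_mult[symmetric] power2_eq_square)
  finally show ?thesis .
qed

lemma Cauchy_Schwarz_nn_integral_lower_bound:
  fixes f g :: "'a \<Rightarrow> ennreal" and A B :: real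
  assumes [measurable]: "f \<in> borel_measurable M" "g \<in> borel_measurable M"
    and A: "0 \<le> A" "ennreal A \<le> (\<integral>\<^sup>+x. f x * g x \<partial>M)"
    and B: "0 < B" "(\<integral>\<^sup>+x. g x ^ 2 \<partial>M) \<le> ennreal B"
  shows "ennreal (A\<^sup>2 / B) \<le> (\<integral>\<^sup>+x. f x ^ 2 \<partial>M)"
proof -
  have "ennreal (A\<^sup>2) \<le> (\<integral>\<^sup>+x. f x * g x \<partial>M)\<^sup>2"
    using A by (simp add: ennreal_power[symmetric] power_mono)
  also have "\<dots> \<le> (\<integral>\<^sup>+x. f x ^ 2 \<partial>M) * (\<integral>\<^sup>+x. g x ^ 2 \<partial>M)"
    by (rule Cauchy_Schwarz_nn_integral) measurable
  also have "\<dots> \<le> (\<integral>\<^sup>+x. f x ^ 2 \<partial>M) * ennreal B"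
    using B by (intro mult_left_mono) auto
  finally have bound: "ennreal (A\<^sup>2) \<le> (\<integral>\<^sup>+x. f x ^ 2 \<partial>M) * ennreal B" .
  show ?thesis
  proof (cases "\<integral>\<^sup>+x. f x ^ 2 \<partial>M" rule: ennreal_cases)
    case (real r)
    then have "A\<^sup>2 \<le> r * B"
      using bound B by (simp add: ennreal_mult[symmetric])
    then show ?thesis
      unfolding real using B by (intro ennreal_leI) (simp add: divide_le_eq)
  qed simp
qed

lemma fourier_energy_ge_smoothing_gap:
  fixes g :: "real \<Rightarrow> real" and l R x1 x2 :: real
  assumes l: "l > 0" and [measurable]: "g \<in> borel_measurable borel" and g: "integrable lborel g"
    and R: "R > 0" and x12: "\<bar>x1 - x2\<bar> \<le> 2 * R"
  shows "ennreal (((LINT x|lborel. g x * normal_density x1 (sqrt 2 / l) x)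
                   - (LINT x|lborel. g x * normal_density x2 (sqrt 2 / l) x))\<^sup>2 / (4 * R))
         \<le> (\<integral>\<^sup>+y. ennreal ((cmod (fourier g y))\<^sup>2 * \<bar>y\<bar>\<^sup>2 * exp (- y\<^sup>2 / l\<^sup>2)) \<partial>lborel)"
proof -
  define \<Delta> where "\<Delta> = (LINT x|lborel. g x * normal_density x1 (sqrt 2 / l) x)
                   - (LINT x|lborel. g x * normal_density x2 (sqrt 2 / l) x)"
  define w where "w y = \<bar>y\<bar>\<^sup>2 * exp (- y\<^sup>2 / l\<^sup>2)" for y
  define Q where "Q y = exp (- y\<^sup>2 / l\<^sup>2) * (cis (y * x1) - cis (y * x2))" for y
  define P where "P a y = fourier g y * (exp (- y\<^sup>2 / l\<^sup>2) * cis (y * a))" for a y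
  define F where "F y = ennreal (cmod (fourier g y) * sqrt (w y))" for y
  \<comment> \<open>at \<open>y = 0\<close> both \<open>w\<close> and \<open>Q\<close> vanish, so the junk value of the division is harmless\<close>
  define G where "G y = ennreal (cmod (Q y) / sqrt (w y))" for y
  have [measurable]: "fourier g \<in> borel_measurable borel"
    unfolding fourier_def by measurable
  have P_int: "integrable lborel (P a)"
    and P_integral: "(LINT y|lborel. P a y) = sqrt (2 * pi) * (LINT x|lborel. g x * normal_density a (sqrt 2 / l) x)" for a
    unfolding P_def using fourier_gaussian_pairing[OF l _ g] by simp_all
  have FQ: "fourier g y * Q y = P x1 y - P x2 y" for y
    unfolding P_def Q_def by (simp add: algebra_simps)
  have FQ_int: "integrable lborel (\<lambda>y. fourier g y * Q y)"
    unfolding FQ using P_int by simp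
  have pairing: "ennreal (sqrt (2 * pi) * \<bar>\<Delta>\<bar>) \<le> (\<integral>\<^sup>+y. F y * G y \<partial>lborel)"
  proof -
    have "(LINT y|lborel. fourier g y * Q y) = sqrt (2 * pi) * \<Delta>"
      unfolding FQ \<Delta>_def using P_int P_integral by (simp add: algebra_simps)
    then have "ennreal (sqrt (2 * pi) * \<bar>\<Delta>\<bar>) = ennreal (norm (LINT y|lborel. fourier g y * Q y))"
      by (simp add: norm_mult)
    also have "\<dots> \<le> (\<integral>\<^sup>+y. norm (fourier g y * Q y) \<partial>lborel)"
      by (rule integral_norm_bound_ennreal[OF FQ_int])
    also have "\<dots> = (\<integral>\<^sup>+y. F y * G y \<partial>lborel)"
    proof (intro nn_integral_cong)
      fix y
      show "ennreal (norm (fourier g y * Q y)) = F y * G y"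
      proof (cases "y = 0")
        case False
        then have "w y > 0"
          by (simp add: w_def)
        then show ?thesis
          unfolding F_def G_def by (simp add: norm_mult ennreal_mult[symmetric])
      qed (simp add: Q_def F_def G_def w_def)
    qed
    finally show ?thesis .
  qed
  have "G y ^ 2 = ennreal ((cmod (Q y))\<^sup>2 / w y)" for y
    unfolding G_def w_def by (simp add: ennreal_power power_divide)
  then have G_energy: "(\<integral>\<^sup>+y. G y ^ 2 \<partial>lborel) \<le> ennreal (8 * pi * R)"
    using nn_integral_damped_cis_diff_le[OF l R x12] unfolding Q_def w_def by simp
  have F_energy: "F y ^ 2 = ennreal ((cmod (fourier g y))\<^sup>2 * \<bar>y\<bar>\<^sup>2 * exp (- y\<^sup>2 / l\<^sup>2))" for y
    unfolding F_def w_def by (simp add: ennreal_power power_mult_distrib)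
  have "ennreal ((sqrt (2 * pi) * \<bar>\<Delta>\<bar>)\<^sup>2 / (8 * pi * R)) \<le> (\<integral>\<^sup>+y. F y ^ 2 \<partial>lborel)"
    using pairing G_energy R
    by (intro Cauchy_Schwarz_nn_integral_lower_bound) (simp_all add: F_def G_def Q_def w_def)
  moreover have "(sqrt (2 * pi) * \<bar>\<Delta>\<bar>)\<^sup>2 / (8 * pi * R) = \<Delta>\<^sup>2 / (4 * R)"
    by (simp add: power_mult_distrib)
  ultimately show ?thesis
    unfolding \<Delta>_def F_energy by simp
qed

theorem lemma4p9:
  fixes \<sigma> :: "real \<Rightarrow> real" and L R \<epsilon> l :: real
  assumes bounded: "\<And>x. \<bar>\<sigma> x\<bar> \<le> 1"
    and lip: "L-lipschitz_on UNIV \<sigma>"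
    and nondeg: "nondegenerate R \<epsilon> \<sigma>"
    and R: "R \<ge> 1"
    and eps: "0 < \<epsilon>" "\<epsilon> < 1"
    and ell: "l \<ge> 20 * (R + L) / \<epsilon>"
  shows "(\<integral>\<^sup>+ y. ennreal ((cmod (fourier (\<lambda>x. \<sigma> x * exp (- x\<^sup>2 / (2 * l\<^sup>2))) y))\<^sup>2
              * \<bar>y\<bar>\<^sup>2 * exp (- y\<^sup>2 / l\<^sup>2)) \<partial>lborel)
         \<ge> ennreal (\<epsilon>\<^sup>2 / (8 * R))"
proof -
  obtain x1 x2 where x1: "\<bar>x1\<bar> \<le> R" and x2: "\<bar>x2\<bar> \<le> R" and gap: "\<epsilon> \<le> \<sigma> x1 - \<sigma> x2"
    using nondeg unfolding nondegenerate_def by (force simp: abs_le_iff)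
  define g where "g x = \<sigma> x * exp (- x\<^sup>2 / (2 * l\<^sup>2))" for x
  define \<Delta> where "\<Delta> = (LINT x|lborel. g x * normal_density x1 (sqrt 2 / l) x)
                   - (LINT x|lborel. g x * normal_density x2 (sqrt 2 / l) x)"
  have l: "l > 0"
    using ell R eps lipschitz_on_nonneg[OF lip] by (smt (verit) divide_pos_pos)
  have \<sigma>_measurable [measurable]: "\<sigma> \<in> borel_measurable borel"
    using lip by (rule lipschitz_on_UNIV_borel_measurable)
  have "ennreal (\<Delta>\<^sup>2 / (4 * R)) \<le> (\<integral>\<^sup>+ y. ennreal ((cmod (fourier g y))\<^sup>2 * \<bar>y\<bar>\<^sup>2 * exp (- y\<^sup>2 / l\<^sup>2)) \<partial>lborel)"
    unfolding \<Delta>_def g_def using l R x1 x2 integrable_bounded_mult_gaussian[OF \<sigma>_measurable bounded]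
    by (intro fourier_energy_ge_smoothing_gap) auto
  moreover have "3 / 4 * \<epsilon> \<le> \<Delta>"
    unfolding \<Delta>_def g_def using gaussian_smoothing_gap_ge[OF bounded lip x1 x2 gap R eps ell] by simp
  then have "(3 / 4 * \<epsilon>)\<^sup>2 \<le> \<Delta>\<^sup>2"
    using eps by (intro power_mono) auto
  then have "9 * \<epsilon>\<^sup>2 \<le> 16 * \<Delta>\<^sup>2"
    by (simp add: power_divide power_mult_distrib)
  then have "\<epsilon>\<^sup>2 \<le> 2 * \<Delta>\<^sup>2"
    using zero_le_power2[of \<Delta>] by linarith
  then have "\<epsilon>\<^sup>2 / (8 * R) \<le> \<Delta>\<^sup>2 / (4 * R)"
    using R by (simp add: field_simps)
  ultimately show ?thesis
    unfolding g_def by (meson ennreal_leI order_trans)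
qed

end
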